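(* Assume the standing setting and assumption in the context. Fix $b>r$ with $\mu(r,b]>0$. There exist a constant $C>0$ and an index $N\in\mathbb N$, depending on $d$, $b$ and $\mu$, such that for any interval $(c,h]\subset[b,\infty)$ and any $x\in\mathbb Z^d$ with $|x|_1\ge N$, $$\mathbb E\big[\nu_x(c,h]\big]\ \le\ C\,\mu(c,h].$$
   Context: Setting: $d\ge2$; $\mathcal E^d$ nearest-neighbor edges of $\mathbb Z^d$; $\{\tau_e\}$ i.i.d. non-negative with law $\mu$, distribution function $F$, essential infimum $r$. Standing assumption: $F(r)<p_c(d)$ if $r=0$ and $F(r)<\vec p_c(d)$ if $r>0$ ($p_c(d)$, $\vec p_c(d)$: critical probabilities of Bernoulli bond and oriented bond percolation on $\mathbb Z^d$). $T(\gamma)=\sum_{e\in\gamma}\tau_e$; geodesics are vertex self-avoiding paths minimizing $T$. Fix a deterministic ordering of finite vertex self-avoiding paths; $\pi^{(x)}$ is the first geodesic from $0$ to $x$ in it. $\nu_x(B)=\frac{1}{|\pi^{(x)}|}\#\{e\in\pi^{(x)}:\tau_e\in B\}$. *)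

theory Defs
  imports "HOL-Probability.Probability"
begin

type_synonym vertex = "nat \<Rightarrow> int"
type_synonym edge = "vertex set"

definition Zd :: "nat \<Rightarrow> vertex set" where
  "Zd d = {v. \<forall>i\<ge>d. v i = 0}"

definition l1norm :: "nat \<Rightarrow> vertex \<Rightarrow> int" where
  "l1norm d v = (\<Sum>i<d. \<bar>v i\<bar>)"

definition origin :: vertex where "origin = (\<lambda>_. 0)"

definition Ed :: "nat \<Rightarrow> edge set" where
  "Ed d = {{u, v} | u v. u \<in> Zd d \<and> v \<in> Zd d \<and> l1norm d (\<lambda>i. u i - v i) = 1}"

definition path_edges :: "vertex list \<Rightarrow> edge list" where
  "path_edges p = map (\<lambda>(u, v). {u, v}) (zip p (tl p))"

definition sa_path :: "nat \<Rightarrow> vertex list \<Rightarrow> vertex \<Rightarrow> vertex \<Rightarrow> bool" where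
  "sa_path d p x y \<longleftrightarrow> p \<noteq> [] \<and> hd p = x \<and> last p = y \<and> distinct p \<and>
     set p \<subseteq> Zd d \<and> set (path_edges p) \<subseteq> Ed d"

definition passage :: "(edge \<Rightarrow> real) \<Rightarrow> vertex list \<Rightarrow> real" where
  "passage \<omega> p = sum_list (map \<omega> (path_edges p))"

definition geodesics :: "nat \<Rightarrow> (edge \<Rightarrow> real) \<Rightarrow> vertex \<Rightarrow> vertex list set" where
  "geodesics d \<omega> x = {p. sa_path d p origin x \<and>
     (\<forall>q. sa_path d q origin x \<longrightarrow> passage \<omega> p \<le> passage \<omega> q)}"

text \<open>First geodesic from 0 to x w.r.t. the (well-)ordering R of paths
  (the empty list if no geodesic exists, an event of probability zero).\<close>
definition first_geodesic ::
  "(vertex list \<times> vertex list) set \<Rightarrow> nat \<Rightarrow> (edge \<Rightarrow> real) \<Rightarrow> vertex \<Rightarrow> vertex list" where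
  "first_geodesic R d \<omega> x =
     (if geodesics d \<omega> x = {} then []
      else (SOME p. p \<in> geodesics d \<omega> x \<and> (\<forall>q\<in>geodesics d \<omega> x. (p, q) \<in> R)))"

definition nu ::
  "(vertex list \<times> vertex list) set \<Rightarrow> nat \<Rightarrow> (edge \<Rightarrow> real) \<Rightarrow> vertex \<Rightarrow> real set \<Rightarrow> real" where
  "nu R d \<omega> x B =
     (let \<pi> = first_geodesic R d \<omega> x in
       real (card {e \<in> set (path_edges \<pi>). \<omega> e \<in> B}) / real (length (path_edges \<pi>)))"

definition env :: "nat \<Rightarrow> real measure \<Rightarrow> (edge \<Rightarrow> real) measure" where
  "env d \<mu> = PiM (Ed d) (\<lambda>_. \<mu>)"

definition perc :: "nat \<Rightarrow> real \<Rightarrow> (edge \<Rightarrow> bool) measure" where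
  "perc d p = PiM (Ed d) (\<lambda>_. measure_pmf (bernoulli_pmf p))"

definition open_rel :: "nat \<Rightarrow> (edge \<Rightarrow> bool) \<Rightarrow> (vertex \<times> vertex) set" where
  "open_rel d \<eta> = {(u, v). {u, v} \<in> Ed d \<and> \<eta> {u, v}}"

definition oriented_open_rel :: "nat \<Rightarrow> (edge \<Rightarrow> bool) \<Rightarrow> (vertex \<times> vertex) set" where
  "oriented_open_rel d \<eta> =
     {(u, v). {u, v} \<in> Ed d \<and> \<eta> {u, v} \<and> (\<exists>i<d. v = u(i := u i + 1))}"

definition theta :: "nat \<Rightarrow> real \<Rightarrow> real" where
  "theta d p = measure (perc d p)
     {\<eta> \<in> space (perc d p). infinite {v. (origin, v) \<in> (open_rel d \<eta>)\<^sup>*}}"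

definition oriented_theta :: "nat \<Rightarrow> real \<Rightarrow> real" where
  "oriented_theta d p = measure (perc d p)
     {\<eta> \<in> space (perc d p). infinite {v. (origin, v) \<in> (oriented_open_rel d \<eta>)\<^sup>*}}"

definition p_c :: "nat \<Rightarrow> real" where
  "p_c d = Sup {p \<in> {0..1}. theta d p = 0}"

definition oriented_p_c :: "nat \<Rightarrow> real" where
  "oriented_p_c d = Sup {p \<in> {0..1}. oriented_theta d p = 0}"

definition ess_inf_law :: "real measure \<Rightarrow> real" where
  "ess_inf_law \<mu> = Sup {t. measure \<mu> {..<t} = 0}"

definition distr_fun :: "real measure \<Rightarrow> real \<Rightarrow> real" where
  "distr_fun \<mu> t = measure \<mu> {..t}"

definition standing_assumption :: "nat \<Rightarrow> real measure \<Rightarrow> bool" where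
  "standing_assumption d \<mu> \<longleftrightarrow>
     (ess_inf_law \<mu> = 0 \<longrightarrow> distr_fun \<mu> (ess_inf_law \<mu>) < p_c d) \<and>
     (ess_inf_law \<mu> > 0 \<longrightarrow> distr_fun \<mu> (ess_inf_law \<mu>) < oriented_p_c d)"

end

theory Submission
  imports Defs
begin

text \<open>Resample one edge \<open>e\<close> at a time. Lowering the weight of an edge of the first geodesic
  keeps that path the first geodesic, so for fixed other weights the weights \<open>t\<close> of \<open>e\<close> for which
  \<open>e\<close> lies on the first geodesic form a down-set on which the first geodesic \<open>\<pi>\<close> does not
  change. Integrating over the weight of \<open>e\<close>, its contribution to \<open>\<nu>\<^sub>x(A)\<close> is therefore at
  most \<open>\<mu>(A)/|\<pi>|\<close>, while its contribution to \<open>\<nu>\<^sub>x(B)\<close> for a set \<open>B\<close> lying below \<open>A\<close> is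
  exactly \<open>\<mu>(B)/|\<pi>|\<close>. Summing over edges gives
  \<open>\<mu>(B) E \<nu>\<^sub>x(A) \<le> \<mu>(A) E \<nu>\<^sub>x(B) \<le> \<mu>(A)\<close>, and \<open>B = (r, b]\<close> yields \<open>C = 1/\<mu>(r, b]\<close>.
  The bound holds for every \<open>x\<close> (so \<open>N = 0\<close>).\<close>

lemma path_edges_simps [simp]:
  "path_edges [] = []" "path_edges [a] = []"
  "path_edges (a # b # p) = {a, b} # path_edges (b # p)"
  by (simp_all add: path_edges_def)

lemma path_edges_subset: "e \<in> set (path_edges p) \<Longrightarrow> e \<subseteq> set p"
  by (induction p rule: induct_list012) auto

lemma distinct_path_edges: "distinct p \<Longrightarrow> distinct (path_edges p)"
proof (induction p rule: induct_list012)
  case (3 a b p)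
  then have "{a, b} \<notin> set (path_edges (b # p))"
    using path_edges_subset[of "{a, b}" "b # p"] by auto
  with 3 show ?case by simp
qed auto

lemma sum_list_map_fun_upd:
  fixes w :: "'a \<Rightarrow> real"
  assumes "distinct l"
  shows "sum_list (map (w(e := t)) l) = sum_list (map (w(e := s)) l) + (if e \<in> set l then t - s else 0)"
  using assms by (induction l) (auto simp: algebra_simps)

lemma passage_fun_upd:
  "sa_path d q a b \<Longrightarrow>
   passage (w(e := t)) q = passage (w(e := s)) q + (if e \<in> set (path_edges q) then t - s else 0)"
  unfolding passage_def sa_path_def by (rule sum_list_map_fun_upd) (simp add: distinct_path_edges)

locale path_wellorder =
  fixes R :: "(vertex list \<times> vertex list) set"
  assumes well_order: "Well_order R" and field_UNIV: "Field R = UNIV"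
begin

lemma first_geodesic_least:
  assumes "geodesics d w x \<noteq> {}"
  shows "first_geodesic R d w x \<in> geodesics d w x"
    and "\<forall>q\<in>geodesics d w x. (first_geodesic R d w x, q) \<in> R"
proof -
  let ?G = "geodesics d w x"
  interpret wo_rel R using well_order by (simp add: wo_rel_def)
  have "\<exists>p. p \<in> ?G \<and> (\<forall>q\<in>?G. (p, q) \<in> R)"
    using minim_in[of ?G] minim_least[of ?G] field_UNIV assms by auto
  from someI_ex[OF this] assms
  show "first_geodesic R d w x \<in> ?G" "\<forall>q\<in>?G. (first_geodesic R d w x, q) \<in> R"
    by (simp_all add: first_geodesic_def)
qed

lemma first_geodesic_eqI:
  assumes "p \<in> geodesics d w x" and "\<forall>q\<in>geodesics d w x. (p, q) \<in> R"
  shows "first_geodesic R d w x = p"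
proof -
  have "geodesics d w x \<noteq> {}" using assms by auto
  moreover have "antisym R" using well_order by (simp add: order_on_defs)
  ultimately show ?thesis
    using first_geodesic_least[of d w x] assms by (auto dest: antisymD)
qed

lemma first_geodesic_eq_Nil_iff: "first_geodesic R d w x = [] \<longleftrightarrow> geodesics d w x = {}"
proof (cases "geodesics d w x = {}")
  case False
  moreover have "[] \<notin> geodesics d w x" by (simp add: geodesics_def sa_path_def)
  ultimately show ?thesis using first_geodesic_least(1) by metis
qed (simp add: first_geodesic_def)

lemma first_geodesic_eq_iff:
  assumes "sa_path d p origin x"
  shows "first_geodesic R d w x = p \<longleftrightarrow>
    p \<in> geodesics d w x \<and> (\<forall>q\<in>geodesics d w x. (p, q) \<in> R)"
  using assms first_geodesic_eqI first_geodesic_least first_geodesic_eq_Nil_iff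
  by (metis empty_iff sa_path_def)

lemma sa_path_first_geodesic:
  "first_geodesic R d w x \<noteq> [] \<Longrightarrow> sa_path d (first_geodesic R d w x) origin x"
  using first_geodesic_least(1) first_geodesic_eq_Nil_iff by (auto simp: geodesics_def)

lemma first_geodesic_geodesics_subset:
  assumes "geodesics d w' x \<subseteq> geodesics d w x" and "first_geodesic R d w x \<in> geodesics d w' x"
  shows "first_geodesic R d w' x = first_geodesic R d w x"
  using assms first_geodesic_least[of d w x] by (intro first_geodesic_eqI) auto

text \<open>Lowering the weight of an edge of the first geodesic lowers its passage time by exactly
  the decrease, and that of every other path by at most the decrease; so the first geodesic stays
  a geodesic, and no new geodesic appears.\<close>

lemma first_geodesic_lower_edge:
  assumes e: "e \<in> set (path_edges (first_geodesic R d (w(e := t)) x))" and "s < t"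
  shows "first_geodesic R d (w(e := s)) x = first_geodesic R d (w(e := t)) x"
proof (rule first_geodesic_geodesics_subset)
  let ?p = "first_geodesic R d (w(e := t)) x"
  have "?p \<noteq> []" using e by auto
  then have p: "sa_path d ?p origin x" and p_geo: "?p \<in> geodesics d (w(e := t)) x"
    using sa_path_first_geodesic first_geodesic_least(1) first_geodesic_eq_Nil_iff by blast+
  have p_t: "passage (w(e := t)) ?p = passage (w(e := s)) ?p + (t - s)"
    using passage_fun_upd[OF p, of w e t s] e by simp
  have q_t: "passage (w(e := t)) q = passage (w(e := s)) q + (if e \<in> set (path_edges q) then t - s else 0)"
    if "sa_path d q origin x" for q
    using passage_fun_upd[OF that] .
  show "geodesics d (w(e := s)) x \<subseteq> geodesics d (w(e := t)) x"
  proof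
    fix q assume "q \<in> geodesics d (w(e := s)) x"
    then have q: "sa_path d q origin x" and "passage (w(e := s)) q \<le> passage (w(e := s)) ?p"
      using p by (auto simp: geodesics_def)
    moreover have "passage (w(e := t)) ?p \<le> passage (w(e := t)) q"
      using p_geo q by (auto simp: geodesics_def)
    ultimately have "passage (w(e := t)) q \<le> passage (w(e := t)) r" if "sa_path d r origin x" for r
      using p_geo that p_t q_t[OF q] \<open>s < t\<close> by (auto simp: geodesics_def split: if_splits)
    with q show "q \<in> geodesics d (w(e := t)) x" by (simp add: geodesics_def)
  qed
  show "?p \<in> geodesics d (w(e := s)) x"
    using p_geo p_t q_t \<open>s < t\<close> by (fastforce simp: geodesics_def split: if_splits)
qed

lemma first_geodesic_fun_upd_eq:
  assumes "e \<in> set (path_edges (first_geodesic R d (w(e := t)) x))"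
    and "e \<in> set (path_edges (first_geodesic R d (w(e := t')) x))"
  shows "first_geodesic R d (w(e := t)) x = first_geodesic R d (w(e := t')) x"
  using first_geodesic_lower_edge[OF assms(1), of t'] first_geodesic_lower_edge[OF assms(2), of t]
  by (cases t t' rule: linorder_cases) auto

end

lemma nn_integral_PiM_fun_upd:
  fixes M :: "'i \<Rightarrow> 'a measure"
  assumes M: "\<And>j. j \<in> I \<Longrightarrow> prob_space (M j)" and i: "i \<in> I"
    and f: "f \<in> borel_measurable (PiM I M)"
  shows "(\<integral>\<^sup>+w. f w \<partial>PiM I M) = (\<integral>\<^sup>+w. \<integral>\<^sup>+t. f (w(i := t)) \<partial>M i \<partial>PiM (I - {i}) M)"
proof -
  let ?J = "I - {i}"
  interpret J: prob_space "PiM ?J M" using M by (intro prob_space_PiM) auto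
  interpret Mi: prob_space "M i" using M i .
  interpret pair_sigma_finite "M i" "PiM ?J M" ..
  have I: "insert i ?J = I" using i by auto
  have upd: "(\<lambda>(t, w). w(i := t)) \<in> measurable (M i \<Otimes>\<^sub>M PiM ?J M) (PiM I M)"
    using measurable_fun_upd[of I ?J i "\<lambda>z. snd z" "M i \<Otimes>\<^sub>M PiM ?J M" M "\<lambda>z. fst z"] i
    by (simp add: case_prod_beta' insert_absorb)
  have "(\<integral>\<^sup>+w. f w \<partial>PiM I M) = (\<integral>\<^sup>+w. f w \<partial>distr (M i \<Otimes>\<^sub>M PiM ?J M) (PiM I M) (\<lambda>(t, w). w(i := t)))"
    using distr_pair_PiM_eq_PiM[of ?J M i] M i unfolding I by simp
  also have "\<dots> = (\<integral>\<^sup>+z. f (case z of (t, w) \<Rightarrow> w(i := t)) \<partial>(M i \<Otimes>\<^sub>M PiM ?J M))"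
    by (rule nn_integral_distr[OF upd]) (simp add: f)
  also have "\<dots> = (\<integral>\<^sup>+w. \<integral>\<^sup>+t. f (w(i := t)) \<partial>M i \<partial>PiM ?J M)"
    using nn_integral_snd[OF measurable_comp[OF upd f]] by (simp add: comp_def case_prod_beta')
  finally show ?thesis .
qed

lemma countable_Zd: "countable (Zd d)"
proof (rule countable_subset)
  show "Zd d \<subseteq> range (\<lambda>xs i. if i < length xs then xs ! i else 0 :: int)"
  proof
    fix v assume "v \<in> Zd d"
    then have "v = (\<lambda>i. if i < length (map v [0..<d]) then map v [0..<d] ! i else 0)"
      by (auto simp: Zd_def fun_eq_iff)
    then show "v \<in> range (\<lambda>xs i. if i < length xs then xs ! i else 0)" by blast
  qed
qed simp

lemma countable_Ed: "countable (Ed d)"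
proof (rule countable_subset)
  show "Ed d \<subseteq> (\<lambda>(u, v). {u, v}) ` (Zd d \<times> Zd d)" by (auto simp: Ed_def)
qed (use countable_Zd in simp)

lemma countable_sa_paths: "countable {q. sa_path d q a b}"
  by (rule countable_subset[OF _ countable_lists[OF countable_Zd]]) (auto simp: sa_path_def)

definition nu_edge ::
  "(vertex list \<times> vertex list) set \<Rightarrow> nat \<Rightarrow> (edge \<Rightarrow> real) \<Rightarrow> vertex \<Rightarrow> real set \<Rightarrow> edge \<Rightarrow> real" where
  "nu_edge R d w x A e =
     (let \<pi> = first_geodesic R d w x in
       if e \<in> set (path_edges \<pi>) \<and> w e \<in> A then 1 / real (length (path_edges \<pi>)) else 0)"

lemma nu_eq_sum_nu_edge:
  "nu R d w x A = (\<Sum>e\<in>set (path_edges (first_geodesic R d w x)). nu_edge R d w x A e)"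
  by (simp add: nu_def nu_edge_def Let_def sum.inter_filter[symmetric])

lemma nu_le_1: "nu R d w x A \<le> 1"
proof -
  let ?l = "path_edges (first_geodesic R d w x)"
  have "card {e \<in> set ?l. w e \<in> A} \<le> length ?l"
    using card_mono[of "set ?l" "{e \<in> set ?l. w e \<in> A}"] card_length[of ?l] by auto
  then show ?thesis by (simp add: nu_def Let_def divide_le_eq_1)
qed

lemma nu_nonneg: "0 \<le> nu R d w x A"
  by (simp add: nu_def Let_def)

lemma (in path_wellorder) nn_integral_nu_edge_fun_upd_le:
  assumes \<mu>: "finite_measure \<mu>" and A: "A \<in> sets \<mu>" and B: "B \<in> sets \<mu>"
    and B_below_A: "\<forall>s\<in>B. \<forall>t\<in>A. s < t"
  shows "(\<integral>\<^sup>+t. measure \<mu> B * nu_edge R d (w(e := t)) x A e \<partial>\<mu>)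
       \<le> (\<integral>\<^sup>+t. measure \<mu> A * nu_edge R d (w(e := t)) x B e \<partial>\<mu>)"
proof (cases "\<exists>t0\<in>A. e \<in> set (path_edges (first_geodesic R d (w(e := t0)) x))")
  case True
  then obtain t0 where t0: "t0 \<in> A"
    and e: "e \<in> set (path_edges (first_geodesic R d (w(e := t0)) x))" by blast
  define \<kappa> where "\<kappa> = 1 / real (length (path_edges (first_geodesic R d (w(e := t0)) x)))"
  have A_le: "ennreal (nu_edge R d (w(e := t)) x A e) \<le> ennreal \<kappa> * indicator A t" for t
    using first_geodesic_fun_upd_eq[of e d w t x t0] e
    by (auto simp: nu_edge_def \<kappa>_def Let_def indicator_def)
  have B_eq: "ennreal (nu_edge R d (w(e := s)) x B e) = ennreal \<kappa> * indicator B s" for s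
    using first_geodesic_lower_edge[OF e, of s] B_below_A t0 e
    by (auto simp: nu_edge_def \<kappa>_def Let_def indicator_def)
  interpret finite_measure \<mu> by (rule \<mu>)
  have "(\<integral>\<^sup>+t. measure \<mu> B * nu_edge R d (w(e := t)) x A e \<partial>\<mu>)
      \<le> (\<integral>\<^sup>+t. ennreal (measure \<mu> B * \<kappa>) * indicator A t \<partial>\<mu>)"
    using A_le by (intro nn_integral_mono) (simp add: ennreal_mult' mult.assoc mult_left_mono)
  also have "\<dots> = ennreal (measure \<mu> B * \<kappa>) * measure \<mu> A"
    using A by (simp add: nn_integral_cmult_indicator emeasure_eq_measure)
  also have "\<dots> = ennreal (measure \<mu> A * \<kappa>) * measure \<mu> B"
    by (simp add: ennreal_mult'[symmetric] ac_simps)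
  also have "\<dots> = (\<integral>\<^sup>+t. ennreal (measure \<mu> A * \<kappa>) * indicator B t \<partial>\<mu>)"
    using B by (simp add: nn_integral_cmult_indicator emeasure_eq_measure)
  also have "\<dots> = (\<integral>\<^sup>+t. measure \<mu> A * nu_edge R d (w(e := t)) x B e \<partial>\<mu>)"
    by (intro nn_integral_cong) (simp add: B_eq ennreal_mult' mult.assoc)
  finally show ?thesis .
next
  case False
  then have "nu_edge R d (w(e := t)) x A e = 0" for t by (auto simp: nu_edge_def Let_def)
  then show ?thesis by simp
qed

locale fpp_environment = path_wellorder R for R +
  fixes d :: nat and \<mu> :: "real measure"
  assumes prob_space_\<mu>: "prob_space \<mu>" and sets_\<mu>: "sets \<mu> = sets borel"
begin

lemma prob_space_env: "prob_space (env d \<mu>)"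
  unfolding env_def by (rule prob_space_PiM) (use prob_space_\<mu> in auto)

lemma measurable_edge_weight: "e \<in> Ed d \<Longrightarrow> (\<lambda>w. w e) \<in> borel_measurable (env d \<mu>)"
  unfolding env_def
  using measurable_component_singleton[of e "Ed d" "\<lambda>_. \<mu>"] measurable_cong_sets[OF refl sets_\<mu>]
  by blast

lemma borel_measurable_passage:
  assumes "sa_path d q a b"
  shows "(\<lambda>w. passage w q) \<in> borel_measurable (env d \<mu>)"
proof -
  let ?l = "path_edges q"
  have "set ?l \<subseteq> Ed d" using assms by (simp add: sa_path_def)
  then have "(\<lambda>w. \<Sum>i<length ?l. w (?l ! i)) \<in> borel_measurable (env d \<mu>)"
    by (intro borel_measurable_sum measurable_edge_weight) (use nth_mem in blast)
  then show ?thesis by (simp add: passage_def sum_list_sum_nth atLeast0LessThan)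
qed

lemma pred_in_geodesics: "Measurable.pred (env d \<mu>) (\<lambda>w. p \<in> geodesics d w x)"
proof (cases "sa_path d p origin x")
  case True
  have "Measurable.pred (env d \<mu>) (\<lambda>w. \<forall>q\<in>{q. sa_path d q origin x}. passage w p \<le> passage w q)"
  proof (intro measurable_pred_countable countable_sa_paths)
    fix q assume "q \<in> {q. sa_path d q origin x}"
    then show "Measurable.pred (env d \<mu>) (\<lambda>w. passage w p \<le> passage w q)"
      unfolding pred_def using True by (intro borel_measurable_le borel_measurable_passage) auto
  qed
  with True show ?thesis by (simp add: geodesics_def)
qed (simp add: geodesics_def)

lemma measurable_first_geodesic:
  "(\<lambda>w. first_geodesic R d w x) \<in> measurable (env d \<mu>) (count_space (insert [] {q. sa_path d q origin x}))"
proof -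
  let ?P = "{q. sa_path d q origin x}"
  have "Measurable.pred (env d \<mu>) (\<lambda>w. first_geodesic R d w x = p)" if "p \<in> insert [] ?P" for p
  proof (cases "p = []")
    case True
    have "first_geodesic R d w x = [] \<longleftrightarrow> (\<forall>q\<in>?P. q \<notin> geodesics d w x)" for w
      unfolding first_geodesic_eq_Nil_iff by (auto simp: geodesics_def)
    then show ?thesis using True
      by (simp only:) (intro measurable_pred_countable countable_sa_paths pred_intros_logic pred_in_geodesics)
  next
    case False
    then have "first_geodesic R d w x = p \<longleftrightarrow>
        p \<in> geodesics d w x \<and> (\<forall>q\<in>?P. q \<in> geodesics d w x \<longrightarrow> (p, q) \<in> R)" for w
      using that first_geodesic_eq_iff by (auto simp: geodesics_def)
    then show ?thesis
      by (simp only:) (intro measurable_pred_countable countable_sa_paths pred_intros_logic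
          pred_in_geodesics measurable_const; simp)
  qed
  moreover have "first_geodesic R d w x \<in> insert [] ?P" for w
    using sa_path_first_geodesic by auto
  ultimately show ?thesis
    unfolding measurable_count_space_eq_countable[OF countable_insert[OF countable_sa_paths]]
    by (simp add: pred_def vimage_def Int_def conj_commute)
qed

lemma borel_measurable_nu_edge:
  assumes e: "e \<in> Ed d" and A: "A \<in> sets borel"
  shows "(\<lambda>w. nu_edge R d w x A e) \<in> borel_measurable (env d \<mu>)"
proof -
  have [measurable]: "(\<lambda>w. w e) \<in> borel_measurable (env d \<mu>)" "A \<in> sets borel"
    using measurable_edge_weight[OF e] A .
  have "(\<lambda>w. (\<lambda>p w. if e \<in> set (path_edges p) \<and> w e \<in> A then 1 / real (length (path_edges p)) else 0)
      (first_geodesic R d w x) w) \<in> borel_measurable (env d \<mu>)"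
    by (rule measurable_compose_countable'[OF _ measurable_first_geodesic])
      (simp_all add: countable_sa_paths)
  then show ?thesis by (simp add: nu_edge_def Let_def)
qed

lemma nn_integral_nu_eq:
  assumes A: "A \<in> sets borel"
  shows "(\<integral>\<^sup>+w. nu R d w x A \<partial>env d \<mu>)
    = (\<integral>\<^sup>+e. \<integral>\<^sup>+w. nu_edge R d w x A e \<partial>env d \<mu> \<partial>count_space (Ed d))"
proof -
  have "ennreal (nu R d w x A) = (\<integral>\<^sup>+e. nu_edge R d w x A e \<partial>count_space (Ed d))" for w
  proof -
    let ?S = "set (path_edges (first_geodesic R d w x))"
    have "?S \<subseteq> Ed d"
      using sa_path_first_geodesic[of d w x] by (cases "first_geodesic R d w x = []") (auto simp: sa_path_def)
    then have "(\<integral>\<^sup>+e. nu_edge R d w x A e \<partial>count_space (Ed d)) = (\<Sum>e\<in>?S. ennreal (nu_edge R d w x A e))"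
      by (intro nn_integral_count_space') (auto simp: nu_edge_def Let_def)
    then show ?thesis
      by (simp add: nu_eq_sum_nu_edge nu_edge_def Let_def sum_ennreal)
  qed
  then have "(\<integral>\<^sup>+w. nu R d w x A \<partial>env d \<mu>)
      = (\<integral>\<^sup>+w. \<integral>\<^sup>+e. nu_edge R d w x A e \<partial>count_space (Ed d) \<partial>env d \<mu>)"
    by simp
  also have "\<dots> = (\<integral>\<^sup>+e. \<integral>\<^sup>+w. nu_edge R d w x A e \<partial>env d \<mu> \<partial>count_space (Ed d))"
    using A by (intro nn_integral_count_space_nn_integral countable_Ed
        measurable_compose[OF borel_measurable_nu_edge measurable_ennreal])
  finally show ?thesis .
qed

lemma nn_integral_nu_edge_le:
  assumes e: "e \<in> Ed d" and A: "A \<in> sets borel" and B: "B \<in> sets borel"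
    and B_below_A: "\<forall>s\<in>B. \<forall>t\<in>A. s < t"
  shows "measure \<mu> B * (\<integral>\<^sup>+w. nu_edge R d w x A e \<partial>env d \<mu>)
       \<le> measure \<mu> A * (\<integral>\<^sup>+w. nu_edge R d w x B e \<partial>env d \<mu>)"
proof -
  interpret prob_space \<mu> by (rule prob_space_\<mu>)
  have resample: "(\<integral>\<^sup>+w. c * nu_edge R d w x A e \<partial>env d \<mu>)
      = (\<integral>\<^sup>+w. \<integral>\<^sup>+t. c * nu_edge R d (w(e := t)) x A e \<partial>\<mu> \<partial>PiM (Ed d - {e}) (\<lambda>_. \<mu>))"
    if "A \<in> sets borel" for c :: real and A
  proof -
    have [measurable]: "(\<lambda>w. nu_edge R d w x A e) \<in> borel_measurable (PiM (Ed d) (\<lambda>_. \<mu>))"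
      using borel_measurable_nu_edge[OF e that] by (simp add: env_def)
    show ?thesis
      unfolding env_def by (rule nn_integral_PiM_fun_upd[OF prob_space_\<mu> e]) measurable
  qed
  have "measure \<mu> B * (\<integral>\<^sup>+w. nu_edge R d w x A e \<partial>env d \<mu>)
      = (\<integral>\<^sup>+w. measure \<mu> B * nu_edge R d w x A e \<partial>env d \<mu>)"
    using nn_integral_cmult[OF measurable_compose[OF borel_measurable_nu_edge[OF e A] measurable_ennreal]]
    by (simp add: ennreal_mult')
  also have "\<dots> \<le> (\<integral>\<^sup>+w. measure \<mu> A * nu_edge R d w x B e \<partial>env d \<mu>)"
    unfolding resample[OF A] resample[OF B] using A B sets_\<mu> B_below_A
    by (intro nn_integral_mono nn_integral_nu_edge_fun_upd_le) (simp_all add: finite_measure_axioms)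
  also have "\<dots> = measure \<mu> A * (\<integral>\<^sup>+w. nu_edge R d w x B e \<partial>env d \<mu>)"
    using nn_integral_cmult[OF measurable_compose[OF borel_measurable_nu_edge[OF e B] measurable_ennreal]]
    by (simp add: ennreal_mult')
  finally show ?thesis .
qed

lemma nn_integral_nu_le:
  assumes A: "A \<in> sets borel" and B: "B \<in> sets borel" and B_below_A: "\<forall>s\<in>B. \<forall>t\<in>A. s < t"
  shows "measure \<mu> B * (\<integral>\<^sup>+w. nu R d w x A \<partial>env d \<mu>) \<le> measure \<mu> A"
proof -
  interpret env: prob_space "env d \<mu>" by (rule prob_space_env)
  have "measure \<mu> B * (\<integral>\<^sup>+w. nu R d w x A \<partial>env d \<mu>)
      = (\<integral>\<^sup>+e. measure \<mu> B * (\<integral>\<^sup>+w. nu_edge R d w x A e \<partial>env d \<mu>) \<partial>count_space (Ed d))"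
    by (simp add: nn_integral_nu_eq[OF A] nn_integral_cmult)
  also have "\<dots> \<le> (\<integral>\<^sup>+e. measure \<mu> A * (\<integral>\<^sup>+w. nu_edge R d w x B e \<partial>env d \<mu>) \<partial>count_space (Ed d))"
    using A B B_below_A by (intro nn_integral_mono nn_integral_nu_edge_le) auto
  also have "\<dots> = measure \<mu> A * (\<integral>\<^sup>+w. nu R d w x B \<partial>env d \<mu>)"
    by (simp add: nn_integral_nu_eq[OF B] nn_integral_cmult)
  also have "\<dots> \<le> measure \<mu> A * (\<integral>\<^sup>+w. 1 \<partial>env d \<mu>)"
    by (intro mult_left_mono nn_integral_mono) (simp_all add: nu_le_1)
  finally show ?thesis by (simp add: env.emeasure_space_1)
qed

lemma integral_nu_le:
  assumes "A \<in> sets borel" and "B \<in> sets borel" and "\<forall>s\<in>B. \<forall>t\<in>A. s < t"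
    and "measure \<mu> B > 0"
  shows "(\<integral>w. nu R d w x A \<partial>env d \<mu>) \<le> measure \<mu> A / measure \<mu> B"
proof (cases "integrable (env d \<mu>) (\<lambda>w. nu R d w x A)")
  case True
  then have "ennreal (measure \<mu> B * (\<integral>w. nu R d w x A \<partial>env d \<mu>)) \<le> ennreal (measure \<mu> A)"
    using nn_integral_nu_le[OF assms(1-3)]
    by (simp add: ennreal_mult' nn_integral_eq_integral[symmetric] nu_nonneg)
  then have "measure \<mu> B * (\<integral>w. nu R d w x A \<partial>env d \<mu>) \<le> measure \<mu> A"
    by (simp add: ennreal_le_iff)
  with assms(4) show ?thesis
    by (simp add: le_divide_eq mult.commute)
qed (simp add: not_integrable_integral_eq)

end

theorem proposition2p7:
  fixes d :: nat and \<mu> :: "real measure" and b :: real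
    and R :: "(vertex list \<times> vertex list) set"
  assumes "2 \<le> d"
    and "prob_space \<mu>" and "sets \<mu> = sets borel" and "AE t in \<mu>. 0 \<le> t"
    and "standing_assumption d \<mu>"
    and "Well_order R" and "Field R = UNIV"
    and "ess_inf_law \<mu> < b" and "measure \<mu> {ess_inf_law \<mu><..b} > 0"
  shows "\<exists>C>0. \<exists>N::nat. \<forall>c h x. b \<le> c \<longrightarrow> x \<in> Zd d \<longrightarrow> int N \<le> l1norm d x \<longrightarrow>
           (\<integral>\<omega>. nu R d \<omega> x {c<..h} \<partial>env d \<mu>) \<le> C * measure \<mu> {c<..h}"
proof -
  interpret fpp_environment R d \<mu>
    using assms(2,3,6,7) by (simp add: fpp_environment_def fpp_environment_axioms_def path_wellorder_def)
  define C where "C = 1 / measure \<mu> {ess_inf_law \<mu><..b}"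
  have "(\<integral>w. nu R d w x {c<..h} \<partial>env d \<mu>) \<le> C * measure \<mu> {c<..h}" if "b \<le> c" for c h x
  proof -
    have "\<forall>s\<in>{ess_inf_law \<mu><..b}. \<forall>t\<in>{c<..h}. s < t" using that by auto
    then show ?thesis
      using integral_nu_le[of "{c<..h}" "{ess_inf_law \<mu><..b}" x] assms(9) by (simp add: C_def)
  qed
  moreover have "C > 0" using assms(9) by (simp add: C_def)
  ultimately show ?thesis by blast
qed

end
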